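(* Under the setup in the context, fix $z_0\in E$ and work under $\mathbb{P}_{z_0}$ (so $Z_0=z_0$). For $0\le s<t<T$ and $x,y\in E$ define \[ q(s,x;t,y\mid z_0):=\frac{\tilde p_{t-s}(x,y)\displaystyle\int_E\frac{\tilde p_{T-t}(y,z)}{\tilde p_T(z_0,z)}\,\nu(dz)}{\displaystyle\int_E\frac{\tilde p_{T-s}(x,z')}{\tilde p_T(z_0,z')}\,\nu(dz')} \] (assuming these integrals are finite). Then for $0\le s<t<T$, \[ \mathbb{P}_{z_0}(Z_t\in dy\mid\mathcal{F}^Z_s)=\mathbb{P}_{z_0}(Z_t\in dy\mid Z_s,Z_0)=q(s,Z_s;t,y\mid Z_0)\,m(dy). \] Moreover, for fixed $z_0$, $q$ satisfies the Chapman–Kolmogorov identity \[ q(s,x;u,z\mid z_0)=\int_E q(s,x;t,y\mid z_0)\,q(t,y;u,z\mid z_0)\,m(dy) \] for all $0<s<t<u<T$ and $x,z\in E$.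
   Context: Setup (randomised Markov bridge). Let $E\subset\mathbb{R}^n$ be a Borel set and $T\in(0,\infty)$. Let $Y=(Y_t)$ be an $E$-valued strong Markov process with càdlàg paths, realised as the coordinate process on $\Omega^1_T$, the space of right-continuous paths $[0,T)\to E$ with left limits on $(0,T)$. Let $\tilde{\mathbb{P}}^1_y$ be its law when started at $y\in E$, and $(\mathcal{F}^1_t)$ its natural filtration, $\mathcal{F}^1_{T-}:=\sigma(\cup_{t<T}\mathcal{F}^1_t)$. Assume the transition probabilities have densities $\tilde P_t(x,dy)=\tilde p_t(x,y)\,m(dy)$ with respect to a $\sigma$-finite measure $m$ on $E$, satisfying the Chapman–Kolmogorov identity $\tilde p_{t+s}(x,z)=\int_E\tilde p_t(x,y)\tilde p_s(y,z)\,m(dy)$ for $s,t>0$, $s+t\le T$, and $\tilde p_t(x,y)>0$ for all $(t,x,y)\in(0,T]\times E\times E$. Let $X$ be an $E$-valued random variable on a probability space $(\Omega_2,\mathcal{F}_2,\mathbb{P}_2)$ with law $\nu$. Set $\Omega:=\Omega^1_T\times\Omega_2$, $\mathcal{F}_t:=\mathcal{F}^1_t\otimes\mathcal{F}_2$, $\mathcal{F}_{T-}:=\mathcal{F}^1_{T-}\otimes\mathcal{F}_2$, and for $y\in E$ let $\mathbb{P}_y$ be the probability measure on $(\Omega,\mathcal{F}_{T-})$ such that for every $t\in[0,T)$, \[ d\mathbb{P}_y\big|_{\mathcal{F}_t}=\Lambda_t^{(y,T,X)}\,d(\tilde{\mathbb{P}}^1_y\otimes\mathbb{P}_2)\big|_{\mathcal{F}_t},\qquad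 \Lambda_t^{(y,T,X)}(\omega_1,\omega_2):=\frac{\tilde p_{T-t}(Y_t(\omega_1),X(\omega_2))}{\tilde p_T(y,X(\omega_2))}. \] The randomised Markov bridge is $Z_t(\omega_1,\omega_2):=Y_t(\omega_1)$ for $t\in[0,T)$ and $Z_T:=X(\omega_2)$; $\mathcal{F}^Z_t:=\sigma(Z_s;s\in[0,t])$. *)

theory Defs
  imports "HOL-Probability.Probability"
begin

definition path_space :: "'a::topological_space set \<Rightarrow> real \<Rightarrow> (real \<Rightarrow> 'a) set" where
  "path_space E T = {\<omega>. (\<forall>t. t \<notin> {0..<T} \<longrightarrow> \<omega> t = undefined)
      \<and> (\<forall>t\<in>{0..<T}. \<omega> t \<in> E)
      \<and> (\<forall>t\<in>{0..<T}. continuous (at_right t) \<omega>)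
      \<and> (\<forall>t\<in>{0<..<T}. \<exists>l. (\<omega> \<longlongrightarrow> l) (at_left t))}"

definition coord_sigma :: "'a::topological_space set \<Rightarrow> real \<Rightarrow> real set \<Rightarrow> (real \<Rightarrow> 'a) measure" where
  "coord_sigma E T I = sigma (path_space E T)
     {{\<omega> \<in> path_space E T. \<omega> r \<in> B} | r B. r \<in> I \<and> B \<in> sets borel}"

definition gen_sigma :: "'w set \<Rightarrow> (real \<Rightarrow> 'w \<Rightarrow> 'a::topological_space) \<Rightarrow> real set \<Rightarrow> 'w measure" where
  "gen_sigma Om Z I = sigma Om {{\<omega> \<in> Om. Z r \<omega> \<in> B} | r B. r \<in> I \<and> B \<in> sets borel}"

definition rmb_Z :: "real \<Rightarrow> ('b \<Rightarrow> 'a) \<Rightarrow> real \<Rightarrow> (real \<Rightarrow> 'a) \<times> 'b \<Rightarrow> 'a" where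
  "rmb_Z T X t \<omega> = (if t < T then fst \<omega> t else X (snd \<omega>))"

definition rmb_h :: "(real \<Rightarrow> 'a \<Rightarrow> 'a \<Rightarrow> real) \<Rightarrow> real \<Rightarrow> 'a measure \<Rightarrow> 'a \<Rightarrow> real \<Rightarrow> 'a \<Rightarrow> real" where
  "rmb_h p T \<nu> z0 r x = (\<integral>z. p (T - r) x z / p T z0 z \<partial>\<nu>)"

definition rmb_q :: "(real \<Rightarrow> 'a \<Rightarrow> 'a \<Rightarrow> real) \<Rightarrow> real \<Rightarrow> 'a measure \<Rightarrow> 'a
    \<Rightarrow> real \<Rightarrow> 'a \<Rightarrow> real \<Rightarrow> 'a \<Rightarrow> real" where
  "rmb_q p T \<nu> z0 s x t y = p (t - s) x y * rmb_h p T \<nu> z0 t y / rmb_h p T \<nu> z0 s x"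

end

(*
  Under P, the path part of the law restricted to F_t has density h(t, Y_t) with respect to
  the law Q of Y started at z0, where h(t,x) = \<integral> p_{T-t}(x,z) / p_T(z0,z) \<nu>(dz): integrate
  X out of the density \<Lambda>_t.  Chapman--Kolmogorov for p makes h space-time harmonic,
  h(s,x) = \<integral> p_{t-s}(x,y) h(t,y) m(dy).  For a cylinder A in F_s, the Markov property of Q
  then gives
    P(A, Z_t \<in> B) = E_Q[1_A \<integral>_B p_{t-s}(Y_s,y) h(t,y) m(dy)] = E_P[1_A \<integral>_B q(s,Y_s;t,y) m(dy)],
  and the sigma-algebras generated by (Z_r)_{r \<le> s} and by (Z_0, Z_s) consist of such
  cylinders, while Z_0 = z0 almost surely.  The Chapman--Kolmogorov identity for q is that
  of p, the intermediate factors h(t,y) cancelling.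
*)

theory Submission
  imports Defs
begin

lemma nn_integral_kernel_swap:
  fixes k :: "'c \<Rightarrow> 'a \<Rightarrow> real"
  assumes "sigma_finite_measure M" "sigma_finite_measure m" and A: "A \<in> sets M"
    and k: "(\<lambda>(\<omega>, z). k \<omega> z) \<in> borel_measurable (M \<Otimes>\<^sub>M m)" and g: "g \<in> borel_measurable m"
  shows "(\<integral>\<^sup>+ \<omega>. (\<integral>\<^sup>+ z. ennreal (k \<omega> z) * g z \<partial>m) * indicator A \<omega> \<partial>M)
       = (\<integral>\<^sup>+ z. (\<integral>\<^sup>+ \<omega>. ennreal (k \<omega> z) * indicator A \<omega> \<partial>M) * g z \<partial>m)"
proof -
  interpret pair_sigma_finite M m by (intro pair_sigma_finite.intro assms(1,2))
  have [measurable]: "(\<lambda>x. k (fst x) (snd x)) \<in> borel_measurable (M \<Otimes>\<^sub>M m)"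
    using k by (simp add: case_prod_beta')
  note [measurable] = A g
  have k_fst: "k \<omega> \<in> borel_measurable m" if "\<omega> \<in> space M" for \<omega>
    using measurable_Pair2[OF k that] by simp
  have k_snd: "(\<lambda>\<omega>. k \<omega> z) \<in> borel_measurable M" if "z \<in> space m" for z
    using measurable_Pair1[OF k that] by simp
  have "(\<integral>\<^sup>+ \<omega>. (\<integral>\<^sup>+ z. ennreal (k \<omega> z) * g z \<partial>m) * indicator A \<omega> \<partial>M)
      = (\<integral>\<^sup>+ \<omega>. (\<integral>\<^sup>+ z. ennreal (k \<omega> z) * g z * indicator A \<omega> \<partial>m) \<partial>M)"
    using k_fst g by (intro nn_integral_cong nn_integral_multc[symmetric]) measurable
  also have "\<dots> = (\<integral>\<^sup>+ z. (\<integral>\<^sup>+ \<omega>. ennreal (k \<omega> z) * g z * indicator A \<omega> \<partial>M) \<partial>m)"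
    by (rule Fubini'[symmetric]) measurable
  also have "\<dots> = (\<integral>\<^sup>+ z. (\<integral>\<^sup>+ \<omega>. ennreal (k \<omega> z) * indicator A \<omega> \<partial>M) * g z \<partial>m)"
  proof (intro nn_integral_cong)
    fix z assume "z \<in> space m"
    then have "(\<lambda>\<omega>. ennreal (k \<omega> z) * indicator A \<omega>) \<in> borel_measurable M"
      using k_snd by measurable
    from nn_integral_multc[OF this, of "g z"]
    show "(\<integral>\<^sup>+ \<omega>. ennreal (k \<omega> z) * g z * indicator A \<omega> \<partial>M)
        = (\<integral>\<^sup>+ \<omega>. ennreal (k \<omega> z) * indicator A \<omega> \<partial>M) * g z"
      by (simp add: ac_simps)
  qed
  finally show ?thesis .
qed

text \<open>Proof: the law of \<open>Y\<close> under \<open>M\<close> restricted to \<open>A\<close> has the \<open>m\<close>-density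
  \<open>\<lambda>z. \<integral>\<^sup>+\<omega>\<in>A. k \<omega> z \<partial>M\<close>.\<close>

lemma nn_integral_kernel_extend:
  fixes k :: "'c \<Rightarrow> 'a \<Rightarrow> real"
  assumes M: "sigma_finite_measure M" and m: "sigma_finite_measure m"
    and Y: "Y \<in> measurable M m" and A: "A \<in> sets M"
    and k: "(\<lambda>(\<omega>, z). k \<omega> z) \<in> borel_measurable (M \<Otimes>\<^sub>M m)"
    and kernel: "\<And>B. B \<in> sets m \<Longrightarrow> emeasure M (A \<inter> {\<omega> \<in> space M. Y \<omega> \<in> B})
        = (\<integral>\<^sup>+ \<omega>. (\<integral>\<^sup>+ z. ennreal (k \<omega> z) * indicator B z \<partial>m) * indicator A \<omega> \<partial>M)"
    and f: "f \<in> borel_measurable m"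
  shows "(\<integral>\<^sup>+ \<omega>. f (Y \<omega>) * indicator A \<omega> \<partial>M)
       = (\<integral>\<^sup>+ \<omega>. (\<integral>\<^sup>+ z. ennreal (k \<omega> z) * f z \<partial>m) * indicator A \<omega> \<partial>M)"
proof -
  interpret M: sigma_finite_measure M by (rule M)
  define \<kappa> where "\<kappa> z = (\<integral>\<^sup>+ \<omega>. ennreal (k \<omega> z) * indicator A \<omega> \<partial>M)" for z
  have [measurable]: "(\<lambda>x. k (snd x) (fst x)) \<in> borel_measurable (m \<Otimes>\<^sub>M M)"
    using measurable_compose[OF measurable_pair_swap' k] by (simp add: case_prod_beta')
  note [measurable] = A Y
  have \<kappa>_meas [measurable]: "\<kappa> \<in> borel_measurable m"
    unfolding \<kappa>_def by measurable
  have swap: "(\<integral>\<^sup>+ \<omega>. (\<integral>\<^sup>+ z. ennreal (k \<omega> z) * g z \<partial>m) * indicator A \<omega> \<partial>M) = (\<integral>\<^sup>+ z. \<kappa> z * g z \<partial>m)"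
    if "g \<in> borel_measurable m" for g
    unfolding \<kappa>_def by (rule nn_integral_kernel_swap[OF M m A k that])
  have distr_eq: "distr (density M (indicator A)) m Y = density m \<kappa>"
  proof (rule measure_eqI)
    fix B assume "B \<in> sets (distr (density M (indicator A)) m Y)"
    then have [measurable]: "B \<in> sets m" by simp
    have "emeasure (distr (density M (indicator A)) m Y) B
        = (\<integral>\<^sup>+ \<omega>. indicator A \<omega> * indicator (Y -` B \<inter> space M) \<omega> \<partial>M)"
      by (simp add: emeasure_distr emeasure_density)
    also have "\<dots> = (\<integral>\<^sup>+ \<omega>. indicator (A \<inter> {\<omega> \<in> space M. Y \<omega> \<in> B}) \<omega> \<partial>M)"
      by (rule nn_integral_cong) (simp split: split_indicator)
    also have "\<dots> = (\<integral>\<^sup>+ z. \<kappa> z * indicator B z \<partial>m)"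
      using kernel[of B] swap[of "indicator B"] by simp
    also have "\<dots> = emeasure (density m \<kappa>) B"
      by (subst emeasure_density) (auto intro!: nn_integral_cong simp: ac_simps)
    finally show "emeasure (distr (density M (indicator A)) m Y) B = emeasure (density m \<kappa>) B" .
  qed simp
  have "(\<integral>\<^sup>+ \<omega>. f (Y \<omega>) * indicator A \<omega> \<partial>M) = (\<integral>\<^sup>+ z. f z \<partial>distr (density M (indicator A)) m Y)"
    using f by (simp add: nn_integral_distr nn_integral_density ac_simps)
  also have "\<dots> = (\<integral>\<^sup>+ z. \<kappa> z * f z \<partial>m)"
    unfolding distr_eq by (rule nn_integral_density) (use f in measurable)
  finally show ?thesis
    using swap[OF f] by simp
qed

lemma nn_integral_density_on_subalgebra:
  assumes sM: "subalgebra M S" and sN: "subalgebra N S" and g: "g \<in> borel_measurable S"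
    and dens: "\<And>A. A \<in> sets S \<Longrightarrow> emeasure M A = (\<integral>\<^sup>+ x. g x * indicator A x \<partial>N)"
    and f: "f \<in> borel_measurable S"
  shows "(\<integral>\<^sup>+ x. f x \<partial>M) = (\<integral>\<^sup>+ x. g x * f x \<partial>N)"
proof -
  have restr: "restr_to_subalg M S = density (restr_to_subalg N S) g"
  proof (rule measure_eqI)
    fix A assume "A \<in> sets (restr_to_subalg M S)"
    then have A: "A \<in> sets S" by (simp add: sets_restr_to_subalg[OF sM])
    have "emeasure (restr_to_subalg M S) A = (\<integral>\<^sup>+ x. g x * indicator A x \<partial>N)"
      using emeasure_restr_to_subalg[OF sM A] dens[OF A] by simp
    also have "\<dots> = (\<integral>\<^sup>+ x. g x * indicator A x \<partial>restr_to_subalg N S)"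
      by (rule nn_integral_subalgebra2[OF sN, symmetric]) (use g A in measurable)
    also have "\<dots> = emeasure (density (restr_to_subalg N S) g) A"
      by (rule emeasure_density[symmetric])
        (use g A sN in \<open>auto simp: sets_restr_to_subalg intro: measurable_in_subalg\<close>)
    finally show "emeasure (restr_to_subalg M S) A = emeasure (density (restr_to_subalg N S) g) A" .
  qed (simp add: sets_restr_to_subalg[OF sM] sets_restr_to_subalg[OF sN])
  have "(\<integral>\<^sup>+ x. f x \<partial>M) = (\<integral>\<^sup>+ x. f x \<partial>restr_to_subalg M S)"
    by (rule nn_integral_subalgebra2[OF sM f, symmetric])
  also have "\<dots> = (\<integral>\<^sup>+ x. g x * f x \<partial>restr_to_subalg N S)"
    unfolding restr by (rule nn_integral_density) (use g f sN in \<open>auto intro: measurable_in_subalg\<close>)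
  also have "\<dots> = (\<integral>\<^sup>+ x. g x * f x \<partial>N)"
    by (rule nn_integral_subalgebra2[OF sN]) (use g f in measurable)
  finally show ?thesis .
qed

lemma set_integral_eq_enn2real_nn_integral:
  fixes f :: "'a \<Rightarrow> real"
  assumes "A \<in> sets M" "f \<in> borel_measurable M" "\<And>x. x \<in> space M \<Longrightarrow> 0 \<le> f x"
  shows "(\<integral>x\<in>A. f x \<partial>M) = enn2real (\<integral>\<^sup>+ x. ennreal (f x) * indicator A x \<partial>M)"
  unfolding set_lebesgue_integral_def
  by (rule enn2real_nn_integral_eq_integral[symmetric]) (use assms in \<open>auto split: split_indicator\<close>)

locale transition_density =
  fixes E :: "'a::topological_space set" and T :: real and m :: "'a measure"
    and p :: "real \<Rightarrow> 'a \<Rightarrow> 'a \<Rightarrow> real"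
  assumes T_pos: "0 < T"
    and sets_m: "sets m = sets (restrict_space borel E)"
    and sigma_finite_m: "sigma_finite_measure m"
    and p_measurable: "\<forall>t\<in>{0<..T}. (\<lambda>(x, y). p t x y) \<in> borel_measurable (m \<Otimes>\<^sub>M m)"
    and p_pos: "\<forall>t\<in>{0<..T}. \<forall>x\<in>E. \<forall>y\<in>E. p t x y > 0"
    and p_chapman_kolmogorov: "\<forall>s t x z. 0 < s \<longrightarrow> 0 < t \<longrightarrow> s + t \<le> T \<longrightarrow> x \<in> E \<longrightarrow> z \<in> E \<longrightarrow>
        ennreal (p (t + s) x z) = (\<integral>\<^sup>+ y. ennreal (p t x y * p s y z) \<partial>m)"
begin

lemma space_m: "space m = E"
  using sets_eq_imp_space_eq[OF sets_m] by (simp add: space_restrict_space)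

lemma measurable_into_m:
  "f \<in> borel_measurable M \<Longrightarrow> (\<And>x. x \<in> space M \<Longrightarrow> f x \<in> E) \<Longrightarrow> f \<in> measurable M m"
  by (subst measurable_cong_sets[OF refl sets_m]) (rule measurable_restrict_space2, auto)

lemma measurable_const_m: "x \<in> E \<Longrightarrow> (\<lambda>_. x) \<in> measurable M m"
  by (rule measurable_const) (simp add: space_m)

lemma measurable_p:
  assumes "\<tau> \<in> {0<..T}" "f \<in> measurable M m" "g \<in> measurable M m"
  shows "(\<lambda>\<omega>. p \<tau> (f \<omega>) (g \<omega>)) \<in> borel_measurable M"
proof -
  have "(\<lambda>\<omega>. (f \<omega>, g \<omega>)) \<in> measurable M (m \<Otimes>\<^sub>M m)" using assms by measurable
  from measurable_compose[OF this p_measurable[rule_format, OF assms(1)]] show ?thesis by simp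
qed

lemma measurable_p_fst:
  "\<tau> \<in> {0<..T} \<Longrightarrow> x \<in> E \<Longrightarrow> p \<tau> x \<in> borel_measurable m"
  using measurable_p[OF _ measurable_const_m measurable_ident_sets[OF refl]] by simp

lemma measurable_p_snd:
  "\<tau> \<in> {0<..T} \<Longrightarrow> z \<in> E \<Longrightarrow> (\<lambda>y. p \<tau> y z) \<in> borel_measurable m"
  using measurable_p[OF _ measurable_ident_sets[OF refl] measurable_const_m] by simp

lemma has_bochner_integral_chapman_kolmogorov:
  assumes "0 < a" "0 < b" "a + b \<le> T" "x \<in> E" "z \<in> E"
  shows "has_bochner_integral m (\<lambda>y. p a x y * p b y z) (p (a + b) x z)"
proof (rule has_bochner_integral_nn_integral)
  show "(\<lambda>y. p a x y * p b y z) \<in> borel_measurable m"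
    using measurable_p_fst[of a x] measurable_p_snd[of b z] assms by simp
  show "AE y in m. 0 \<le> p a x y * p b y z"
    using p_pos assms by (intro AE_I2) (auto simp: space_m intro!: mult_nonneg_nonneg less_imp_le)
  show "0 \<le> p (a + b) x z"
    using p_pos assms by (auto intro: less_imp_le)
  show "(\<integral>\<^sup>+ y. ennreal (p a x y * p b y z) \<partial>m) = ennreal (p (a + b) x z)"
    using p_chapman_kolmogorov assms by auto
qed

end

locale bridge_weight = transition_density +
  fixes \<nu> :: "'a::topological_space measure" and z0 :: 'a
  assumes prob_space_\<nu>: "prob_space \<nu>"
    and sets_\<nu>: "sets \<nu> = sets m"
    and z0: "z0 \<in> E"
    and integrable_weight: "\<forall>r\<in>{0..<T}. \<forall>x\<in>E. integrable \<nu> (\<lambda>z. p (T - r) x z / p T z0 z)"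
begin

abbreviation h :: "real \<Rightarrow> 'a \<Rightarrow> real" where "h \<equiv> rmb_h p T \<nu> z0"
abbreviation q :: "real \<Rightarrow> 'a \<Rightarrow> real \<Rightarrow> 'a \<Rightarrow> real" where "q \<equiv> rmb_q p T \<nu> z0"

lemma space_\<nu>: "space \<nu> = E"
  using sets_eq_imp_space_eq[OF sets_\<nu>] by (simp add: space_m)

lemma weight_pos: "r \<in> {0..<T} \<Longrightarrow> x \<in> E \<Longrightarrow> z \<in> E \<Longrightarrow> 0 < p (T - r) x z / p T z0 z"
  using p_pos z0 T_pos by auto

lemma h_pos:
  assumes r: "r \<in> {0..<T}" and x: "x \<in> E"
  shows "0 < h r x"
proof -
  interpret prob_space \<nu> by (rule prob_space_\<nu>)
  have nonneg: "AE z in \<nu>. 0 \<le> p (T - r) x z / p T z0 z"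
    using weight_pos[OF r x] by (intro AE_I2) (simp add: space_\<nu> less_imp_le)
  have "h r x \<noteq> 0"
  proof
    assume "h r x = 0"
    then have "AE z in \<nu>. p (T - r) x z / p T z0 z = 0"
      using integral_nonneg_eq_0_iff_AE[OF integrable_weight[rule_format, OF r x] nonneg]
      by (simp add: rmb_h_def)
    then have "AE z in \<nu>. False"
      using AE_space by eventually_elim (metis less_irrefl weight_pos[OF r x] space_\<nu>)
    then show False by simp
  qed
  moreover have "0 \<le> h r x"
    unfolding rmb_h_def by (rule integral_nonneg_AE[OF nonneg])
  ultimately show ?thesis by simp
qed

lemma measurable_weight:
  "r \<in> {0..<T} \<Longrightarrow> (\<lambda>(x, z). p (T - r) x z / p T z0 z) \<in> borel_measurable (m \<Otimes>\<^sub>M \<nu>)"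
proof -
  assume r: "r \<in> {0..<T}"
  have snd: "snd \<in> measurable (m \<Otimes>\<^sub>M \<nu>) m"
    using measurable_snd[of m \<nu>] by (simp cong: measurable_cong_sets add: sets_\<nu>)
  have "(\<lambda>w. p (T - r) (fst w) (snd w) / p T z0 (snd w)) \<in> borel_measurable (m \<Otimes>\<^sub>M \<nu>)"
    using measurable_p[OF _ measurable_fst snd, of "T - r"] measurable_p[OF _ measurable_const_m[OF z0] snd, of T]
      r T_pos by (intro borel_measurable_divide) auto
  then show ?thesis by (simp add: case_prod_beta')
qed

lemma h_measurable: "r \<in> {0..<T} \<Longrightarrow> h r \<in> borel_measurable m"
proof -
  assume r: "r \<in> {0..<T}"
  interpret prob_space \<nu> by (rule prob_space_\<nu>)
  from borel_measurable_lebesgue_integral[OF measurable_weight[OF r]]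
  show ?thesis unfolding rmb_h_def[abs_def] by simp
qed

lemma nn_integral_weight:
  assumes "r \<in> {0..<T}" "x \<in> E"
  shows "(\<integral>\<^sup>+ z. ennreal (p (T - r) x z / p T z0 z) \<partial>\<nu>) = ennreal (h r x)"
  unfolding rmb_h_def using weight_pos[OF assms]
  by (intro nn_integral_eq_integral integrable_weight[rule_format] assms AE_I2)
    (simp add: space_\<nu> less_imp_le)

lemma nn_integral_weight_cmult:
  assumes x: "x \<in> E" and y: "y \<in> E" and st: "0 \<le> s" "s < t" "t < T"
  shows "(\<integral>\<^sup>+ z. ennreal (p (t - s) x y * (p (T - t) y z / p T z0 z)) \<partial>\<nu>) = ennreal (p (t - s) x y * h t y)"
proof -
  have "(\<integral>\<^sup>+ z. ennreal (p (t - s) x y * (p (T - t) y z / p T z0 z)) \<partial>\<nu>)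
      = (\<integral>\<^sup>+ z. ennreal (p (t - s) x y) * ennreal (p (T - t) y z / p T z0 z) \<partial>\<nu>)"
  proof (rule nn_integral_cong)
    fix z assume "z \<in> space \<nu>"
    then have "0 \<le> p (t - s) x y" "0 \<le> p (T - t) y z / p T z0 z"
      using p_pos weight_pos[of t y z] x y st by (auto simp: space_\<nu> less_imp_le)
    then show "ennreal (p (t - s) x y * (p (T - t) y z / p T z0 z))
        = ennreal (p (t - s) x y) * ennreal (p (T - t) y z / p T z0 z)"
      by (rule ennreal_mult)
  qed
  also have "\<dots> = ennreal (p (t - s) x y) * ennreal (h t y)"
    using measurable_Pair2[OF measurable_weight, of t y] nn_integral_weight[of t y] y st
    by (subst nn_integral_cmult) (auto simp: space_m)
  finally show ?thesis
    using p_pos h_pos[of t y] x y st by (simp add: ennreal_mult less_imp_le)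
qed

lemma nn_integral_p_mult_weight:
  assumes x: "x \<in> E" and z: "z \<in> E" and st: "0 \<le> s" "s < t" "t < T"
  shows "(\<integral>\<^sup>+ y. ennreal (p (t - s) x y * (p (T - t) y z / p T z0 z)) \<partial>m) = ennreal (p (T - s) x z / p T z0 z)"
proof -
  have "(\<integral>\<^sup>+ y. ennreal (p (t - s) x y * (p (T - t) y z / p T z0 z)) \<partial>m)
      = (\<integral>\<^sup>+ y. ennreal (p (t - s) x y * p (T - t) y z) * ennreal (1 / p T z0 z) \<partial>m)"
    using p_pos z0 x z st T_pos
    by (intro nn_integral_cong) (auto simp: space_m ennreal_mult[symmetric] less_imp_le)
  also have "\<dots> = (\<integral>\<^sup>+ y. ennreal (p (t - s) x y * p (T - t) y z) \<partial>m) * ennreal (1 / p T z0 z)"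
    using measurable_p_fst[of "t - s" x] measurable_p_snd[of "T - t" z] x z st
    by (intro nn_integral_multc) auto
  also have "(\<integral>\<^sup>+ y. ennreal (p (t - s) x y * p (T - t) y z) \<partial>m) = ennreal (p (T - s) x z)"
    using p_chapman_kolmogorov[rule_format, of "T - t" "t - s" x z] st x z by simp
  finally show ?thesis
    using p_pos z0 x z st T_pos by (simp add: ennreal_mult[symmetric] less_imp_le)
qed

lemma nn_integral_h_harmonic:
  assumes x: "x \<in> E" and st: "0 \<le> s" "s < t" "t < T"
  shows "(\<integral>\<^sup>+ y. ennreal (p (t - s) x y * h t y) \<partial>m) = ennreal (h s x)"
proof -
  interpret \<nu>: prob_space \<nu> by (rule prob_space_\<nu>)
  interpret pair_sigma_finite m \<nu>
    by (intro pair_sigma_finite.intro \<nu>.sigma_finite_measure_axioms sigma_finite_m)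
  let ?\<Phi> = "\<lambda>y z. ennreal (p (t - s) x y * (p (T - t) y z / p T z0 z))"
  have "(\<lambda>w. p (t - s) x (fst w)) \<in> borel_measurable (m \<Otimes>\<^sub>M \<nu>)"
    using measurable_p_fst[of "t - s" x] x st by simp
  moreover have "(\<lambda>w. p (T - t) (fst w) (snd w) / p T z0 (snd w)) \<in> borel_measurable (m \<Otimes>\<^sub>M \<nu>)"
    using measurable_weight[of t] st by (simp add: case_prod_beta')
  ultimately have \<Phi>_meas: "(\<lambda>(y, z). ?\<Phi> y z) \<in> borel_measurable (m \<Otimes>\<^sub>M \<nu>)"
    unfolding case_prod_beta' by (intro measurable_compose[OF _ measurable_ennreal]) measurable
  have "(\<integral>\<^sup>+ y. ennreal (p (t - s) x y * h t y) \<partial>m) = (\<integral>\<^sup>+ y. \<integral>\<^sup>+ z. ?\<Phi> y z \<partial>\<nu> \<partial>m)"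
    using nn_integral_weight_cmult[OF x _ st] by (intro nn_integral_cong) (simp add: space_m)
  also have "\<dots> = (\<integral>\<^sup>+ z. \<integral>\<^sup>+ y. ?\<Phi> y z \<partial>m \<partial>\<nu>)"
    by (rule Fubini'[OF \<Phi>_meas, symmetric])
  also have "\<dots> = (\<integral>\<^sup>+ z. ennreal (p (T - s) x z / p T z0 z) \<partial>\<nu>)"
    using nn_integral_p_mult_weight[OF x _ st] by (intro nn_integral_cong) (simp add: space_\<nu>)
  also have "\<dots> = ennreal (h s x)"
    using nn_integral_weight[of s x] x st by simp
  finally show ?thesis .
qed

lemma has_bochner_integral_h_harmonic:
  assumes x: "x \<in> E" and st: "0 \<le> s" "s < t" "t < T"
  shows "has_bochner_integral m (\<lambda>y. p (t - s) x y * h t y) (h s x)"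
proof (rule has_bochner_integral_nn_integral)
  show "(\<lambda>y. p (t - s) x y * h t y) \<in> borel_measurable m"
    using measurable_p_fst[of "t - s" x] h_measurable[of t] x st by simp
  show "AE y in m. 0 \<le> p (t - s) x y * h t y"
    using p_pos h_pos x st by (intro AE_I2) (auto simp: space_m intro!: mult_nonneg_nonneg less_imp_le)
  show "0 \<le> h s x" using h_pos[of s x] x st by simp
qed (rule nn_integral_h_harmonic[OF assms])

theorem q_chapman_kolmogorov:
  assumes "0 < s" "s < t" "t < u" "u < T" "x \<in> E" "z \<in> E"
  shows "q s x u z = (\<integral>y. q s x t y * q t y u z \<partial>m)"
proof -
  have "(\<integral>y. q s x t y * q t y u z \<partial>m) = (\<integral>y. p (t - s) x y * p (u - t) y z * (h u z / h s x) \<partial>m)"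
  proof (rule Bochner_Integration.integral_cong[OF refl])
    fix y assume "y \<in> space m"
    then have "0 < h t y" using h_pos[of t y] assms by (auto simp: space_m)
    then show "q s x t y * q t y u z = p (t - s) x y * p (u - t) y z * (h u z / h s x)"
      unfolding rmb_q_def by (simp add: field_simps)
  qed
  also have "\<dots> = p (u - s) x z * (h u z / h s x)"
    using has_bochner_integral_chapman_kolmogorov[of "t - s" "u - t" x z] assms
    by (simp add: has_bochner_integral_integral_eq)
  finally show ?thesis unfolding rmb_q_def by simp
qed

definition bridge_transition :: "real \<Rightarrow> real \<Rightarrow> 'a set \<Rightarrow> 'a \<Rightarrow> real" where
  "bridge_transition s t B x = (\<integral>y\<in>B. q s x t y \<partial>m)"

lemma bridge_transition_measurable:
  assumes st: "0 \<le> s" "s < t" "t < T" and B: "B \<in> sets m"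
  shows "bridge_transition s t B \<in> borel_measurable m"
proof -
  interpret sigma_finite_measure m by (rule sigma_finite_m)
  have [measurable]: "(\<lambda>w. p (t - s) (fst w) (snd w)) \<in> borel_measurable (m \<Otimes>\<^sub>M m)"
    using st by (intro measurable_p measurable_fst measurable_snd) auto
  have [measurable]: "h r \<in> borel_measurable m" if "r \<in> {s, t}" for r
    using that st by (intro h_measurable) auto
  note [measurable] = B
  have "(\<lambda>(x, y). indicator B y *\<^sub>R q s x t y) \<in> borel_measurable (m \<Otimes>\<^sub>M m)"
    unfolding rmb_q_def case_prod_beta' by measurable
  from borel_measurable_lebesgue_integral[OF this] show ?thesis
    unfolding bridge_transition_def[abs_def] set_lebesgue_integral_def by simp
qed

lemma p_mult_h_pos:
  "0 \<le> s \<Longrightarrow> s < t \<Longrightarrow> t < T \<Longrightarrow> x \<in> E \<Longrightarrow> y \<in> E \<Longrightarrow> 0 < p (t - s) x y * h t y"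
  using p_pos h_pos[of t y] by simp

lemma bridge_transition_nonneg:
  assumes "0 \<le> s" "s < t" "t < T" "x \<in> E"
  shows "0 \<le> bridge_transition s t B x"
  unfolding bridge_transition_def set_lebesgue_integral_def rmb_q_def
  using assms p_mult_h_pos h_pos[of s x]
  by (intro integral_nonneg_AE AE_I2) (auto simp: space_m split: split_indicator intro!: divide_nonneg_pos less_imp_le)

lemma h_mult_bridge_transition:
  assumes st: "0 \<le> s" "s < t" "t < T" and B: "B \<in> sets m" and x: "x \<in> E"
  shows "ennreal (h s x) * ennreal (bridge_transition s t B x)
       = (\<integral>\<^sup>+ y. ennreal (p (t - s) x y) * (ennreal (h t y) * indicator B y) \<partial>m)"
proof -
  let ?\<phi> = "\<lambda>y. indicator B y * (p (t - s) x y * h t y)"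
  have hsx: "0 < h s x" using h_pos x st by auto
  have \<phi>_nonneg: "0 \<le> ?\<phi> y" if "y \<in> space m" for y
    using that p_mult_h_pos[OF st x] by (auto simp: space_m split: split_indicator intro: less_imp_le)
  have \<phi>_int: "integrable m ?\<phi>"
    using integrable_mult_indicator[OF B integrable.intros[OF has_bochner_integral_h_harmonic[OF x st]]]
    by simp
  have "bridge_transition s t B x = (\<integral>y. ?\<phi> y / h s x \<partial>m)"
    unfolding bridge_transition_def set_lebesgue_integral_def rmb_q_def
    by (intro Bochner_Integration.integral_cong) auto
  then have "h s x * bridge_transition s t B x = (\<integral>y. ?\<phi> y \<partial>m)"
    using hsx by simp
  then have "ennreal (h s x) * ennreal (bridge_transition s t B x) = (\<integral>\<^sup>+ y. ennreal (?\<phi> y) \<partial>m)"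
    using hsx bridge_transition_nonneg[OF st x, of B] \<phi>_nonneg
    by (simp add: ennreal_mult[symmetric] nn_integral_eq_integral[OF \<phi>_int] AE_I2)
  also have "\<dots> = (\<integral>\<^sup>+ y. ennreal (p (t - s) x y) * (ennreal (h t y) * indicator B y) \<partial>m)"
    using p_pos h_pos x st
    by (intro nn_integral_cong) (auto simp: space_m ennreal_mult less_imp_le split: split_indicator)
  finally show ?thesis .
qed

end

lemma space_coord_sigma: "space (coord_sigma E T I) = path_space E T"
  unfolding coord_sigma_def by (rule space_measure_of) auto

lemma sets_coord_sigma:
  "sets (coord_sigma E T I)
     = sigma_sets (path_space E T) {{\<omega> \<in> path_space E T. \<omega> r \<in> B} | r B. r \<in> I \<and> B \<in> sets borel}"
  unfolding coord_sigma_def by (rule sets_measure_of) auto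

lemma coord_sigma_mono: "I \<subseteq> J \<Longrightarrow> sets (coord_sigma E T I) \<subseteq> sets (coord_sigma E T J)"
  unfolding sets_coord_sigma by (rule sigma_sets_mono') blast

lemma coord_sigma_le_T: "t < T \<Longrightarrow> sets (coord_sigma E T {0..t}) \<subseteq> sets (coord_sigma E T {0..<T})"
  by (rule coord_sigma_mono) auto

lemma cylinder_in_coord_sigma:
  "r \<in> I \<Longrightarrow> B \<in> sets borel \<Longrightarrow> {\<omega> \<in> path_space E T. \<omega> r \<in> B} \<in> sets (coord_sigma E T I)"
  unfolding sets_coord_sigma by (rule sigma_sets.Basic) blast

lemma measurable_coord_sigma_coord: "r \<in> I \<Longrightarrow> (\<lambda>\<omega>. \<omega> r) \<in> borel_measurable (coord_sigma E T I)"
proof (rule measurableI)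
  fix B :: "'a set" assume "r \<in> I" "B \<in> sets borel"
  moreover have "(\<lambda>\<omega>. \<omega> r) -` B \<inter> space (coord_sigma E T I) = {\<omega> \<in> path_space E T. \<omega> r \<in> B}"
    by (auto simp: space_coord_sigma)
  ultimately show "(\<lambda>\<omega>. \<omega> r) -` B \<inter> space (coord_sigma E T I) \<in> sets (coord_sigma E T I)"
    by (simp add: cylinder_in_coord_sigma)
qed simp

lemma path_space_in: "\<omega> \<in> path_space E T \<Longrightarrow> 0 \<le> r \<Longrightarrow> r < T \<Longrightarrow> \<omega> r \<in> E"
  unfolding path_space_def by auto

lemma space_gen_sigma: "space (gen_sigma \<Omega> Z I) = \<Omega>"
  unfolding gen_sigma_def by (rule space_measure_of) auto

lemma sets_gen_sigma:
  "sets (gen_sigma \<Omega> Z I) = sigma_sets \<Omega> {{\<omega> \<in> \<Omega>. Z r \<omega> \<in> B} | r B. r \<in> I \<and> B \<in> sets borel}"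
  unfolding gen_sigma_def by (rule sets_measure_of) auto

lemma sets_pair_coord_sigma_mono:
  assumes "I \<subseteq> J"
  shows "sets (coord_sigma E T I \<Otimes>\<^sub>M M) \<subseteq> sets (coord_sigma E T J \<Otimes>\<^sub>M M)"
proof -
  have "sets (coord_sigma E T I) \<subseteq> sets (coord_sigma E T J)"
    by (rule coord_sigma_mono[OF assms])
  then show ?thesis
    unfolding sets_pair_measure space_coord_sigma by (intro sigma_sets_mono) blast
qed

locale randomised_bridge = bridge_weight E T m p "distr M2 m X" z0
  for E :: "'a::t1_space set" and T m p and M2 :: "'b measure" and X z0 +
  fixes Q :: "(real \<Rightarrow> 'a) measure" and P :: "((real \<Rightarrow> 'a) \<times> 'b) measure"
  assumes prob_space_Q: "prob_space Q"
    and sets_Q: "sets Q = sets (coord_sigma E T {0..<T})"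
    and Q_start: "AE \<omega> in Q. \<omega> 0 = z0"
    and Q_Markov: "\<forall>s t. 0 \<le> s \<longrightarrow> s < t \<longrightarrow> t < T \<longrightarrow>
        (\<forall>A\<in>sets (coord_sigma E T {0..s}). \<forall>B\<in>sets m.
           emeasure Q (A \<inter> {\<omega> \<in> path_space E T. \<omega> t \<in> B})
             = (\<integral>\<^sup>+ \<omega>. (\<integral>\<^sup>+ z. ennreal (p (t - s) (\<omega> s) z) * indicator B z \<partial>m) * indicator A \<omega> \<partial>Q))"
    and prob_space_M2: "prob_space M2"
    and X_measurable: "X \<in> measurable M2 m"
    and prob_space_P: "prob_space P"
    and sets_P: "sets P = sets (coord_sigma E T {0..<T} \<Otimes>\<^sub>M M2)"
    and P_density: "\<forall>t\<in>{0..<T}. \<forall>A\<in>sets (coord_sigma E T {0..t} \<Otimes>\<^sub>M M2).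
        emeasure P A = (\<integral>\<^sup>+ \<omega>. ennreal (p (T - t) (fst \<omega> t) (X (snd \<omega>)) / p T z0 (X (snd \<omega>)))
                                * indicator A \<omega> \<partial>(Q \<Otimes>\<^sub>M M2))"
begin

abbreviation \<F> :: "real set \<Rightarrow> ((real \<Rightarrow> 'a) \<times> 'b) measure" where
  "\<F> I \<equiv> gen_sigma (space P) (rmb_Z T X) I"

lemma space_Q: "space Q = path_space E T"
  using sets_eq_imp_space_eq[OF sets_Q] by (simp add: space_coord_sigma)

lemma space_P: "space P = path_space E T \<times> space M2"
  using sets_eq_imp_space_eq[OF sets_P] by (simp add: space_pair_measure space_coord_sigma)

lemma measurable_coord_m:
  "r \<in> I \<Longrightarrow> 0 \<le> r \<Longrightarrow> r < T \<Longrightarrow> (\<lambda>\<omega>. \<omega> r) \<in> measurable (coord_sigma E T I) m"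
  by (rule measurable_into_m[OF measurable_coord_sigma_coord])
    (auto simp: space_coord_sigma intro: path_space_in)

lemma measurable_Q_coord: "0 \<le> r \<Longrightarrow> r < T \<Longrightarrow> (\<lambda>\<omega>. \<omega> r) \<in> measurable Q m"
  using measurable_coord_m[of r "{0..<T}"] by (simp cong: measurable_cong_sets add: sets_Q)

lemma coord_sigma_in_sets_Q: "s < T \<Longrightarrow> A \<in> sets (coord_sigma E T {0..s}) \<Longrightarrow> A \<in> sets Q"
  using coord_sigma_le_T[of s] by (auto simp: sets_Q)

lemma cylinder_in_sets_P: "s < T \<Longrightarrow> A \<in> sets (coord_sigma E T {0..s}) \<Longrightarrow> A \<times> space M2 \<in> sets P"
  using coord_sigma_in_sets_Q[of s A] by (simp add: sets_P sets_Q)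

lemma gen_sigma_cylinder:
  assumes I: "I \<subseteq> {0..s}" and s: "s < T" and A: "A \<in> sets (\<F> I)"
  obtains A1 where "A1 \<in> sets (coord_sigma E T {0..s})" "A = A1 \<times> space M2"
proof -
  have "\<exists>A1\<in>sets (coord_sigma E T {0..s}). A = A1 \<times> space M2"
    using A unfolding sets_gen_sigma
  proof (induct rule: sigma_sets.induct)
    case (Basic a)
    then obtain r B where rB: "a = {\<omega> \<in> space P. rmb_Z T X r \<omega> \<in> B}" "r \<in> I" "B \<in> sets borel"
      by blast
    then have "a = {\<omega> \<in> path_space E T. \<omega> r \<in> B} \<times> space M2"
      using I s by (auto simp: space_P rmb_Z_def)
    with rB I show ?case by (blast intro: cylinder_in_coord_sigma)
  next
    case Empty
    show ?case by (rule bexI[of _ "{}"]) auto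
  next
    case (Compl a)
    then obtain A1 where "A1 \<in> sets (coord_sigma E T {0..s})" "a = A1 \<times> space M2" by blast
    then show ?case
      by (intro bexI[of _ "path_space E T - A1"])
        (auto simp: space_P dest: sets.compl_sets simp: space_coord_sigma)
  next
    case (Union a)
    then obtain f where f: "\<And>i. f i \<in> sets (coord_sigma E T {0..s})" "\<And>i. a i = f i \<times> space M2"
      by metis
    then show ?case by (intro bexI[of _ "\<Union>i. f i"]) auto
  qed
  with that show ?thesis by blast
qed

lemma subalgebra_gen_sigma:
  assumes "I \<subseteq> {0..s}" "s < T"
  shows "subalgebra P (\<F> I)"
  unfolding subalgebra_def space_gen_sigma
  using gen_sigma_cylinder[OF assms] cylinder_in_sets_P[OF assms(2)] by blast

lemma measurable_gen_sigma_coord: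
  assumes "r \<in> I" "0 \<le> r" "r < T"
  shows "(\<lambda>\<omega>. fst \<omega> r) \<in> measurable (\<F> I) m"
proof (rule measurable_into_m)
  show "(\<lambda>\<omega>. fst \<omega> r) \<in> borel_measurable (\<F> I)"
  proof (rule measurableI)
    fix B :: "'a set" assume "B \<in> sets borel"
    moreover have "(\<lambda>\<omega>. fst \<omega> r) -` B \<inter> space (\<F> I) = {\<omega> \<in> space P. rmb_Z T X r \<omega> \<in> B}"
      using assms by (auto simp: space_gen_sigma rmb_Z_def)
    ultimately show "(\<lambda>\<omega>. fst \<omega> r) -` B \<inter> space (\<F> I) \<in> sets (\<F> I)"
      unfolding sets_gen_sigma using assms by (auto intro: sigma_sets.Basic)
  qed simp
qed (use assms in \<open>auto simp: space_gen_sigma space_P intro: path_space_in\<close>)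

lemma nn_integral_Q_Markov:
  assumes st: "0 \<le> s" "s < t" "t < T" and A: "A \<in> sets (coord_sigma E T {0..s})"
    and f: "f \<in> borel_measurable m"
  shows "(\<integral>\<^sup>+ \<omega>. f (\<omega> t) * indicator A \<omega> \<partial>Q)
       = (\<integral>\<^sup>+ \<omega>. (\<integral>\<^sup>+ z. ennreal (p (t - s) (\<omega> s) z) * f z \<partial>m) * indicator A \<omega> \<partial>Q)"
proof (rule nn_integral_kernel_extend[OF _ sigma_finite_m _ _ _ _ f])
  show "sigma_finite_measure Q"
    using prob_space_Q by (simp add: prob_space_imp_sigma_finite)
  show "(\<lambda>\<omega>. \<omega> t) \<in> measurable Q m"
    using st by (intro measurable_Q_coord) auto
  show "A \<in> sets Q"
    using st by (intro coord_sigma_in_sets_Q[OF _ A]) auto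
  show "(\<lambda>(\<omega>, z). p (t - s) (\<omega> s) z) \<in> borel_measurable (Q \<Otimes>\<^sub>M m)"
    using measurable_p[OF _ measurable_compose[OF measurable_fst measurable_Q_coord] measurable_snd, of "t - s" s]
      st by (simp add: case_prod_beta')
  show "emeasure Q (A \<inter> {\<omega> \<in> space Q. \<omega> t \<in> B})
      = (\<integral>\<^sup>+ \<omega>. (\<integral>\<^sup>+ z. ennreal (p (t - s) (\<omega> s) z) * indicator B z \<partial>m) * indicator A \<omega> \<partial>Q)"
    if "B \<in> sets m" for B
    using Q_Markov st A that by (simp add: space_Q)
qed

definition \<Lambda> :: "real \<Rightarrow> (real \<Rightarrow> 'a) \<times> 'b \<Rightarrow> real" where
  "\<Lambda> t \<omega> = p (T - t) (fst \<omega> t) (X (snd \<omega>)) / p T z0 (X (snd \<omega>))"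

lemma measurable_\<Lambda>:
  assumes t: "t \<in> {0..<T}" "t \<in> I"
  shows "(\<lambda>\<omega>. ennreal (\<Lambda> t \<omega>)) \<in> borel_measurable (coord_sigma E T I \<Otimes>\<^sub>M M2)"
proof -
  have X: "(\<lambda>\<omega>. X (snd \<omega>)) \<in> measurable (coord_sigma E T I \<Otimes>\<^sub>M M2) m"
    using measurable_compose[OF measurable_snd X_measurable] .
  have Y: "(\<lambda>\<omega>. fst \<omega> t) \<in> measurable (coord_sigma E T I \<Otimes>\<^sub>M M2) m"
    using measurable_compose[OF measurable_fst measurable_coord_m] t by auto
  have "(\<lambda>\<omega>. \<Lambda> t \<omega>) \<in> borel_measurable (coord_sigma E T I \<Otimes>\<^sub>M M2)"
    unfolding \<Lambda>_def using t T_pos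
    by (intro borel_measurable_divide measurable_p[OF _ Y X] measurable_p[OF _ measurable_const_m[OF z0] X]) auto
  then show ?thesis by measurable
qed

lemma nn_integral_P_density:
  assumes t: "t \<in> {0..<T}" and f: "f \<in> borel_measurable (coord_sigma E T {0..t} \<Otimes>\<^sub>M M2)"
  shows "(\<integral>\<^sup>+ \<omega>. f \<omega> \<partial>P) = (\<integral>\<^sup>+ \<omega>. ennreal (\<Lambda> t \<omega>) * f \<omega> \<partial>(Q \<Otimes>\<^sub>M M2))"
proof (rule nn_integral_density_on_subalgebra[OF _ _ _ _ f])
  have "sets (coord_sigma E T {0..t} \<Otimes>\<^sub>M M2) \<subseteq> sets (coord_sigma E T {0..<T} \<Otimes>\<^sub>M M2)"
    using t by (intro sets_pair_coord_sigma_mono) auto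
  then show "subalgebra P (coord_sigma E T {0..t} \<Otimes>\<^sub>M M2)"
    and "subalgebra (Q \<Otimes>\<^sub>M M2) (coord_sigma E T {0..t} \<Otimes>\<^sub>M M2)"
    by (simp_all add: subalgebra_def sets_P space_P sets_pair_measure_cong[OF sets_Q refl]
        space_pair_measure space_Q space_coord_sigma)
  show "(\<lambda>\<omega>. ennreal (\<Lambda> t \<omega>)) \<in> borel_measurable (coord_sigma E T {0..t} \<Otimes>\<^sub>M M2)"
    using t by (intro measurable_\<Lambda>) auto
  show "emeasure P A = (\<integral>\<^sup>+ \<omega>. ennreal (\<Lambda> t \<omega>) * indicator A \<omega> \<partial>(Q \<Otimes>\<^sub>M M2))"
    if "A \<in> sets (coord_sigma E T {0..t} \<Otimes>\<^sub>M M2)" for A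
    using P_density t that by (simp add: \<Lambda>_def)
qed

lemma measurable_coord_sigma_Q:
  assumes "t < T" "g \<in> borel_measurable (coord_sigma E T {0..t})"
  shows "g \<in> borel_measurable Q"
proof -
  have "subalgebra (coord_sigma E T {0..<T}) (coord_sigma E T {0..t})"
    using coord_sigma_le_T[OF assms(1)] by (simp add: subalgebra_def space_coord_sigma)
  from measurable_from_subalg[OF this assms(2)] show ?thesis
    by (simp cong: measurable_cong_sets add: sets_Q)
qed

lemma nn_integral_weight_X:
  assumes "r \<in> {0..<T}" "x \<in> E"
  shows "(\<integral>\<^sup>+ y. ennreal (p (T - r) x (X y) / p T z0 (X y)) \<partial>M2) = ennreal (h r x)"
proof -
  have "(\<lambda>z. ennreal (p (T - r) x z / p T z0 z)) \<in> borel_measurable m"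
    using measurable_Pair2[OF measurable_weight[OF assms(1)], of x] assms
    by (simp add: space_m cong: measurable_cong_sets)
  then show ?thesis
    using nn_integral_distr[OF X_measurable] nn_integral_weight[OF assms] by simp
qed

lemma nn_integral_P_path:
  assumes t: "t \<in> {0..<T}" and g: "g \<in> borel_measurable (coord_sigma E T {0..t})"
  shows "(\<integral>\<^sup>+ \<omega>. g (fst \<omega>) \<partial>P) = (\<integral>\<^sup>+ \<omega>. ennreal (h t (\<omega> t)) * g \<omega> \<partial>Q)"
proof -
  interpret M2: prob_space M2 by (rule prob_space_M2)
  have gQ: "g \<in> borel_measurable Q"
    using t g by (intro measurable_coord_sigma_Q) auto
  have "(\<lambda>\<omega>. ennreal (\<Lambda> t \<omega>)) \<in> borel_measurable (Q \<Otimes>\<^sub>M M2)"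
    using measurable_\<Lambda>[of t "{0..<T}"] t
    by (simp cong: measurable_cong_sets add: sets_pair_measure_cong[OF sets_Q refl])
  then have \<Lambda>g: "(\<lambda>\<omega>. ennreal (\<Lambda> t \<omega>) * g (fst \<omega>)) \<in> borel_measurable (Q \<Otimes>\<^sub>M M2)"
    using gQ by measurable
  have "(\<integral>\<^sup>+ \<omega>. g (fst \<omega>) \<partial>P) = (\<integral>\<^sup>+ \<omega>. ennreal (\<Lambda> t \<omega>) * g (fst \<omega>) \<partial>(Q \<Otimes>\<^sub>M M2))"
    using measurable_compose[OF measurable_fst g] by (intro nn_integral_P_density t)
  also have "\<dots> = (\<integral>\<^sup>+ \<omega>. \<integral>\<^sup>+ y. ennreal (\<Lambda> t (\<omega>, y)) * g \<omega> \<partial>M2 \<partial>Q)"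
    using M2.nn_integral_fst[OF \<Lambda>g] by simp
  also have "\<dots> = (\<integral>\<^sup>+ \<omega>. ennreal (h t (\<omega> t)) * g \<omega> \<partial>Q)"
  proof (rule nn_integral_cong)
    fix \<omega> assume "\<omega> \<in> space Q"
    then have \<omega>: "\<omega> t \<in> E" "\<omega> \<in> space (coord_sigma E T {0..<T})"
      using t by (auto simp: space_Q space_coord_sigma intro: path_space_in)
    have "(\<lambda>y. ennreal (\<Lambda> t (\<omega>, y))) \<in> borel_measurable M2"
      using measurable_Pair2[OF measurable_\<Lambda>[of t "{0..<T}"] \<omega>(2)] t by simp
    then show "(\<integral>\<^sup>+ y. ennreal (\<Lambda> t (\<omega>, y)) * g \<omega> \<partial>M2) = ennreal (h t (\<omega> t)) * g \<omega>"
      using nn_integral_weight_X[OF t \<omega>(1)] by (simp add: nn_integral_multc \<Lambda>_def)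
  qed
  finally show ?thesis .
qed

lemma AE_P_start: "AE \<omega> in P. fst \<omega> 0 = z0"
proof -
  let ?B = "{\<omega> \<in> path_space E T. \<omega> 0 \<in> - {z0}}"
  have B: "?B \<in> sets (coord_sigma E T {0..0})"
    by (rule cylinder_in_coord_sigma) auto
  have "emeasure P (?B \<times> space M2) = (\<integral>\<^sup>+ \<omega>. indicator (?B \<times> space M2) \<omega> \<partial>P)"
    using cylinder_in_sets_P[OF T_pos B] by simp
  also have "\<dots> = (\<integral>\<^sup>+ \<omega>. indicator ?B (fst \<omega>) \<partial>P)"
    by (rule nn_integral_cong) (auto simp: space_P split: split_indicator)
  also have "\<dots> = (\<integral>\<^sup>+ \<omega>. ennreal (h 0 (\<omega> 0)) * indicator ?B \<omega> \<partial>Q)"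
    using B T_pos by (intro nn_integral_P_path) auto
  also have "\<dots> = (\<integral>\<^sup>+ \<omega>. 0 \<partial>Q)"
    using Q_start by (intro nn_integral_cong_AE) (auto elim!: eventually_mono)
  finally have "?B \<times> space M2 \<in> null_sets P"
    using cylinder_in_sets_P[OF T_pos B] by auto
  then show ?thesis
    by (rule AE_I') (auto simp: space_P)
qed

lemma nn_integral_P_cylinder_Z:
  assumes st: "0 \<le> s" "s < t" "t < T" and A: "A \<in> sets (coord_sigma E T {0..s})" and B: "B \<in> sets m"
  shows "(\<integral>\<^sup>+ \<omega>. indicator {\<omega> \<in> space P. rmb_Z T X t \<omega> \<in> B} \<omega> * indicator (A \<times> space M2) \<omega> \<partial>P)
       = (\<integral>\<^sup>+ \<omega>. (\<integral>\<^sup>+ y. ennreal (p (t - s) (\<omega> s) y) * (ennreal (h t y) * indicator B y) \<partial>m)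
                 * indicator A \<omega> \<partial>Q)"
proof -
  have "A \<in> sets (coord_sigma E T {0..t})"
    using coord_sigma_mono[of "{0..s}" "{0..t}" E T] A st by auto
  moreover have "(\<lambda>\<omega>. \<omega> t) \<in> measurable (coord_sigma E T {0..t}) m"
    using st by (intro measurable_coord_m) auto
  ultimately have g: "(\<lambda>\<omega>. indicator B (\<omega> t) * indicator A \<omega> :: ennreal) \<in> borel_measurable (coord_sigma E T {0..t})"
    using B by measurable
  have "(\<integral>\<^sup>+ \<omega>. indicator {\<omega> \<in> space P. rmb_Z T X t \<omega> \<in> B} \<omega> * indicator (A \<times> space M2) \<omega> \<partial>P)
      = (\<integral>\<^sup>+ \<omega>. indicator B (fst \<omega> t) * indicator A (fst \<omega>) \<partial>P)"
    using st by (intro nn_integral_cong) (auto simp: space_P rmb_Z_def split: split_indicator)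
  also have "\<dots> = (\<integral>\<^sup>+ \<omega>. ennreal (h t (\<omega> t)) * (indicator B (\<omega> t) * indicator A \<omega>) \<partial>Q)"
    using st by (intro nn_integral_P_path g) auto
  also have "\<dots> = (\<integral>\<^sup>+ \<omega>. ennreal (h t (\<omega> t)) * indicator B (\<omega> t) * indicator A \<omega> \<partial>Q)"
    by (simp add: ac_simps)
  also have "\<dots> = (\<integral>\<^sup>+ \<omega>. (\<integral>\<^sup>+ y. ennreal (p (t - s) (\<omega> s) y) * (ennreal (h t y) * indicator B y) \<partial>m)
                 * indicator A \<omega> \<partial>Q)"
    using h_measurable[of t] st B
    by (intro nn_integral_Q_Markov[OF st A, of "\<lambda>y. ennreal (h t y) * indicator B y"]) auto
  finally show ?thesis .
qed

lemma nn_integral_P_cylinder_bridge_transition: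
  assumes st: "0 \<le> s" "s < t" "t < T" and A: "A \<in> sets (coord_sigma E T {0..s})" and B: "B \<in> sets m"
  shows "(\<integral>\<^sup>+ \<omega>. ennreal (bridge_transition s t B (fst \<omega> s)) * indicator (A \<times> space M2) \<omega> \<partial>P)
       = (\<integral>\<^sup>+ \<omega>. (\<integral>\<^sup>+ y. ennreal (p (t - s) (\<omega> s) y) * (ennreal (h t y) * indicator B y) \<partial>m)
                 * indicator A \<omega> \<partial>Q)"
proof -
  have "(\<lambda>\<omega>. \<omega> s) \<in> measurable (coord_sigma E T {0..s}) m"
    using st by (intro measurable_coord_m) auto
  then have g: "(\<lambda>\<omega>. ennreal (bridge_transition s t B (\<omega> s)) * indicator A \<omega>) \<in> borel_measurable (coord_sigma E T {0..s})"
    using bridge_transition_measurable[OF st B] A by measurable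
  have "(\<integral>\<^sup>+ \<omega>. ennreal (bridge_transition s t B (fst \<omega> s)) * indicator (A \<times> space M2) \<omega> \<partial>P)
      = (\<integral>\<^sup>+ \<omega>. ennreal (bridge_transition s t B (fst \<omega> s)) * indicator A (fst \<omega>) \<partial>P)"
    by (intro nn_integral_cong) (auto simp: space_P split: split_indicator)
  also have "\<dots> = (\<integral>\<^sup>+ \<omega>. ennreal (h s (\<omega> s)) * (ennreal (bridge_transition s t B (\<omega> s)) * indicator A \<omega>) \<partial>Q)"
    using st by (intro nn_integral_P_path g) auto
  also have "\<dots> = (\<integral>\<^sup>+ \<omega>. (\<integral>\<^sup>+ y. ennreal (p (t - s) (\<omega> s) y) * (ennreal (h t y) * indicator B y) \<partial>m)
                 * indicator A \<omega> \<partial>Q)"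
  proof (rule nn_integral_cong)
    fix \<omega> assume "\<omega> \<in> space Q"
    then have "\<omega> s \<in> E" using st by (auto simp: space_Q intro: path_space_in)
    from h_mult_bridge_transition[OF st B this] show "ennreal (h s (\<omega> s)) * (ennreal (bridge_transition s t B (\<omega> s)) * indicator A \<omega>)
        = (\<integral>\<^sup>+ y. ennreal (p (t - s) (\<omega> s) y) * (ennreal (h t y) * indicator B y) \<partial>m) * indicator A \<omega>"
      by (metis mult.assoc)
  qed
  finally show ?thesis .
qed

lemma bridge_transition_nonneg_P:
  "0 \<le> s \<Longrightarrow> s < t \<Longrightarrow> t < T \<Longrightarrow> \<omega> \<in> space P \<Longrightarrow> 0 \<le> bridge_transition s t B (fst \<omega> s)"
  using path_space_in[of "fst \<omega>" E T s] by (intro bridge_transition_nonneg) (auto simp: space_P)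

lemma measurable_P_coord: "0 \<le> r \<Longrightarrow> r < T \<Longrightarrow> (\<lambda>\<omega>. fst \<omega> r) \<in> measurable P m"
  using measurable_compose[OF measurable_fst measurable_coord_m[of r "{0..<T}"]]
  by (simp cong: measurable_cong_sets add: sets_P)

lemma Z_event_in_sets_P:
  assumes "0 \<le> t" "t < T" "B \<in> sets m"
  shows "{\<omega> \<in> space P. rmb_Z T X t \<omega> \<in> B} \<in> sets P"
proof -
  have "{\<omega> \<in> space P. rmb_Z T X t \<omega> \<in> B} = (\<lambda>\<omega>. fst \<omega> t) -` B \<inter> space P"
    using assms by (auto simp: rmb_Z_def)
  then show ?thesis
    using measurable_sets[OF measurable_P_coord assms(3)] assms by simp
qed

lemma nn_integral_P_cylinder_Z_eq_bridge_transition: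
  assumes st: "0 \<le> s" "s < t" "t < T" and A: "A \<in> sets (coord_sigma E T {0..s})" and B: "B \<in> sets m"
  shows "(\<integral>\<^sup>+ \<omega>. ennreal (indicator {\<omega> \<in> space P. rmb_Z T X t \<omega> \<in> B} \<omega>) * indicator (A \<times> space M2) \<omega> \<partial>P)
       = (\<integral>\<^sup>+ \<omega>. ennreal (bridge_transition s t B (fst \<omega> s)) * indicator (A \<times> space M2) \<omega> \<partial>P)"
  using nn_integral_P_cylinder_Z[OF assms] nn_integral_P_cylinder_bridge_transition[OF assms]
  by (simp add: ennreal_indicator)

lemma integrable_P_bridge_transition:
  assumes st: "0 \<le> s" "s < t" "t < T" and B: "B \<in> sets m"
  shows "integrable P (\<lambda>\<omega>. bridge_transition s t B (fst \<omega> s))"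
proof (rule integrableI_bounded)
  interpret prob_space P by (rule prob_space_P)
  show "(\<lambda>\<omega>. bridge_transition s t B (fst \<omega> s)) \<in> borel_measurable P"
    using measurable_compose[OF measurable_P_coord bridge_transition_measurable[OF st B]] st by simp
  have "(\<integral>\<^sup>+ \<omega>. ennreal (norm (bridge_transition s t B (fst \<omega> s))) \<partial>P)
      = (\<integral>\<^sup>+ \<omega>. ennreal (bridge_transition s t B (fst \<omega> s)) * indicator (path_space E T \<times> space M2) \<omega> \<partial>P)"
  proof (rule nn_integral_cong)
    fix \<omega> assume "\<omega> \<in> space P"
    with bridge_transition_nonneg_P[OF st this, of B] show "ennreal (norm (bridge_transition s t B (fst \<omega> s)))
        = ennreal (bridge_transition s t B (fst \<omega> s)) * indicator (path_space E T \<times> space M2) \<omega>"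
      by (simp add: space_P)
  qed
  also have "\<dots> = (\<integral>\<^sup>+ \<omega>. ennreal (indicator {\<omega> \<in> space P. rmb_Z T X t \<omega> \<in> B} \<omega>)
                    * indicator (path_space E T \<times> space M2) \<omega> \<partial>P)"
    using sets.top[of "coord_sigma E T {0..s}"] st B
    by (intro nn_integral_P_cylinder_Z_eq_bridge_transition[symmetric]) (simp_all add: space_coord_sigma)
  also have "\<dots> \<le> (\<integral>\<^sup>+ \<omega>. 1 \<partial>P)"
    by (intro nn_integral_mono) (simp split: split_indicator)
  finally show "(\<integral>\<^sup>+ \<omega>. ennreal (norm (bridge_transition s t B (fst \<omega> s))) \<partial>P) < \<infinity>"
    by (simp add: emeasure_space_1 le_less_trans)
qed

lemma real_cond_exp_bridge_transition:
  assumes st: "0 \<le> s" "s < t" "t < T" and I: "s \<in> I" "I \<subseteq> {0..s}" and B: "B \<in> sets m"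
  shows "AE \<omega> in P. real_cond_exp P (\<F> I) (indicator {\<omega>' \<in> space P. rmb_Z T X t \<omega>' \<in> B}) \<omega>
           = bridge_transition s t B (fst \<omega> s)"
proof -
  let ?S = "{\<omega>' \<in> space P. rmb_Z T X t \<omega>' \<in> B}" and ?g = "\<lambda>\<omega>. bridge_transition s t B (fst \<omega> s)"
  have sT: "s < T" using st by simp
  interpret prob_space P by (rule prob_space_P)
  have sub: "subalgebra P (\<F> I)"
    by (rule subalgebra_gen_sigma[OF I(2) sT])
  interpret finite_measure_subalgebra P "\<F> I"
    by (intro finite_measure_subalgebra.intro finite_measure_subalgebra_axioms.intro finite_measure_axioms sub)
  have g_F: "?g \<in> borel_measurable (\<F> I)"
    using measurable_compose[OF measurable_gen_sigma_coord bridge_transition_measurable[OF st B]] I st by auto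
  have S: "?S \<in> sets P"
    using st B by (intro Z_event_in_sets_P) auto
  show ?thesis
  proof (rule real_cond_exp_charact[OF _ _ integrable_P_bridge_transition[OF st B] g_F])
    fix A assume "A \<in> sets (\<F> I)"
    with gen_sigma_cylinder[OF I(2) sT] obtain A1
      where A1: "A1 \<in> sets (coord_sigma E T {0..s})" "A = A1 \<times> space M2" by blast
    have A1_P: "A1 \<times> space M2 \<in> sets P"
      by (rule cylinder_in_sets_P[OF sT A1(1)])
    have "(\<integral>\<omega>\<in>A1 \<times> space M2. indicator ?S \<omega> \<partial>P)
        = enn2real (\<integral>\<^sup>+ \<omega>. ennreal (indicator ?S \<omega>) * indicator (A1 \<times> space M2) \<omega> \<partial>P)"
      by (rule set_integral_eq_enn2real_nn_integral[OF A1_P]) (use S in auto)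
    also have "\<dots> = enn2real (\<integral>\<^sup>+ \<omega>. ennreal (?g \<omega>) * indicator (A1 \<times> space M2) \<omega> \<partial>P)"
      using nn_integral_P_cylinder_Z_eq_bridge_transition[OF st A1(1) B] by simp
    also have "\<dots> = (\<integral>\<omega>\<in>A1 \<times> space M2. ?g \<omega> \<partial>P)"
      by (rule set_integral_eq_enn2real_nn_integral[OF A1_P measurable_from_subalg[OF sub g_F]
          bridge_transition_nonneg_P[OF st], symmetric])
    finally show "(\<integral>\<omega>\<in>A. indicator ?S \<omega> \<partial>P) = (\<integral>\<omega>\<in>A. ?g \<omega> \<partial>P)"
      unfolding A1(2) .
  next
    show "integrable P (indicator ?S :: _ \<Rightarrow> real)"
      using S by (intro integrable_real_indicator) (simp_all add: less_top[symmetric])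
  qed
qed

theorem conditional_law_Z:
  assumes st: "0 \<le> s" "s < t" "t < T" and I: "s \<in> I" "I \<subseteq> {0..s}" and B: "B \<in> sets m"
  shows "AE \<omega> in P. real_cond_exp P (\<F> I) (indicator {\<omega>' \<in> space P. rmb_Z T X t \<omega>' \<in> B}) \<omega>
           = (\<integral>y\<in>B. rmb_q p T (distr M2 m X) (rmb_Z T X 0 \<omega>) s (rmb_Z T X s \<omega>) t y \<partial>m)"
  using real_cond_exp_bridge_transition[OF assms] AE_P_start
  by eventually_elim (use st T_pos in \<open>simp add: bridge_transition_def rmb_Z_def\<close>)

end

theorem proposition2p2:
  fixes E :: "'a::euclidean_space set" and T :: real and m :: "'a measure"
    and p :: "real \<Rightarrow> 'a \<Rightarrow> 'a \<Rightarrow> real"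
    and Ptil :: "'a \<Rightarrow> (real \<Rightarrow> 'a) measure"
    and M2 :: "'b measure" and X :: "'b \<Rightarrow> 'a"
    and P :: "((real \<Rightarrow> 'a) \<times> 'b) measure" and z0 :: 'a
  assumes E: "E \<in> sets borel" and T: "0 < T"
    and m_sets: "sets m = sets (restrict_space borel E)"
    and m_sfin: "sigma_finite_measure m"
    and p_meas: "\<forall>t\<in>{0<..T}. (\<lambda>(x, y). p t x y) \<in> borel_measurable (m \<Otimes>\<^sub>M m)"
    and p_pos: "\<forall>t\<in>{0<..T}. \<forall>x\<in>E. \<forall>y\<in>E. p t x y > 0"
    and p_CK: "\<forall>s t x z. 0 < s \<longrightarrow> 0 < t \<longrightarrow> s + t \<le> T \<longrightarrow> x \<in> E \<longrightarrow> z \<in> E \<longrightarrow>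
        ennreal (p (t + s) x z) = (\<integral>\<^sup>+ y. ennreal (p t x y * p s y z) \<partial>m)"
    and Ptil_prob: "\<forall>y\<in>E. prob_space (Ptil y)"
    and Ptil_sets: "\<forall>y\<in>E. sets (Ptil y) = sets (coord_sigma E T {0..<T})"
    and Ptil_init: "\<forall>y\<in>E. AE \<omega> in Ptil y. \<omega> 0 = y"
    and Ptil_Markov: "\<forall>y\<in>E. \<forall>s t. 0 \<le> s \<longrightarrow> s < t \<longrightarrow> t < T \<longrightarrow>
        (\<forall>A\<in>sets (coord_sigma E T {0..s}). \<forall>B\<in>sets m.
           emeasure (Ptil y) (A \<inter> {\<omega> \<in> path_space E T. \<omega> t \<in> B})
             = (\<integral>\<^sup>+ \<omega>. (\<integral>\<^sup>+ z. ennreal (p (t - s) (\<omega> s) z) * indicator B z \<partial>m)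
                       * indicator A \<omega> \<partial>Ptil y))"
    and M2: "prob_space M2"
    and X: "X \<in> measurable M2 m"
    and z0: "z0 \<in> E"
    and P_prob: "prob_space P"
    and P_sets: "sets P = sets (coord_sigma E T {0..<T} \<Otimes>\<^sub>M M2)"
    and P_dens: "\<forall>t\<in>{0..<T}. \<forall>A\<in>sets (coord_sigma E T {0..t} \<Otimes>\<^sub>M M2).
        emeasure P A = (\<integral>\<^sup>+ \<omega>. ennreal (p (T - t) (fst \<omega> t) (X (snd \<omega>)) / p T z0 (X (snd \<omega>)))
                                * indicator A \<omega> \<partial>(Ptil z0 \<Otimes>\<^sub>M M2))"
    and finite: "\<forall>r\<in>{0..<T}. \<forall>x\<in>E. integrable (distr M2 m X) (\<lambda>z. p (T - r) x z / p T z0 z)"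
  shows "(\<forall>s t. 0 \<le> s \<longrightarrow> s < t \<longrightarrow> t < T \<longrightarrow> (\<forall>B\<in>sets m.
            (AE \<omega> in P. real_cond_exp P (gen_sigma (space P) (rmb_Z T X) {0..s})
                 (indicator {\<omega>' \<in> space P. rmb_Z T X t \<omega>' \<in> B}) \<omega>
               = set_lebesgue_integral m B
                   (\<lambda>y. rmb_q p T (distr M2 m X) (rmb_Z T X 0 \<omega>) s (rmb_Z T X s \<omega>) t y))
          \<and> (AE \<omega> in P. real_cond_exp P (gen_sigma (space P) (rmb_Z T X) {0, s})
                 (indicator {\<omega>' \<in> space P. rmb_Z T X t \<omega>' \<in> B}) \<omega>
               = set_lebesgue_integral m B
                   (\<lambda>y. rmb_q p T (distr M2 m X) (rmb_Z T X 0 \<omega>) s (rmb_Z T X s \<omega>) t y))))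
       \<and> (\<forall>s t u x z. 0 < s \<longrightarrow> s < t \<longrightarrow> t < u \<longrightarrow> u < T \<longrightarrow> x \<in> E \<longrightarrow> z \<in> E \<longrightarrow>
            rmb_q p T (distr M2 m X) z0 s x u z
              = (\<integral>y. rmb_q p T (distr M2 m X) z0 s x t y * rmb_q p T (distr M2 m X) z0 t y u z \<partial>m))"
proof -
  interpret randomised_bridge E T m p M2 X z0 "Ptil z0" P
    by (intro randomised_bridge.intro bridge_weight.intro transition_density.intro
        bridge_weight_axioms.intro randomised_bridge_axioms.intro prob_space.prob_space_distr[OF M2 X])
      (use assms in auto)
  show ?thesis
    by (intro conjI allI impI ballI conditional_law_Z q_chapman_kolmogorov) auto
qed

end
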